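(* Let $p$ be an odd prime and $N=\mathbb Z_{p^2}$. Let $\Phi$ be the unique subgroup of order $p-1$ of the unit group $\mathbb Z_{p^2}^\times$, acting on $(\mathbb Z_{p^2},+)$ by multiplication. Let $M=\{p\}$, so that the orbit $p\Phi = p\mathbb Z_{p^2}\setminus\{0\}$ is the zero multiplier orbit, and let the remaining orbit representatives $R\setminus M$ be the elements of a coset $c+p\mathbb Z_{p^2}$ with $c$ a unit. With multiplication $a*b=0$ if $b\in p\mathbb Z_{p^2}$ and $a*b=a\phi_b$ otherwise (where $b=r_b\phi_b$, $r_b\in R\setminus M$, $\phi_b\in\Phi$), $(N,+,* )$ is a planar nearring and $D(N)=p\mathbb Z_{p^2}$; in particular all distributive elements are zero multipliers.
   Context: A (right) nearring $(N,+,* )$ is a set with a group $(N,+)$, a semigroup $(N,* )$, and right distributivity $(a+b)*c=a*c+b*c$. $N$ is planar if the relation $a\cong b$ ($x*a=x*b$ for all $x$) has at least $3$ classes and for all $a,b,c$ with $a\not\cong b$ the equation $x*a=x*b+c$ has a unique solution. Zero multipliers are the $n$ with $x*n=0$ for all $x$. $D(N)=\{n: n*(a+b)=n*a+n*b\ \forall a,b\}$. *)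

theory Defs
  imports "HOL-Algebra.Group" "HOL-Number_Theory.Cong"
begin

definition nearring :: "'a set \<Rightarrow> ('a \<Rightarrow> 'a \<Rightarrow> 'a) \<Rightarrow> ('a \<Rightarrow> 'a \<Rightarrow> 'a) \<Rightarrow> bool" where
  "nearring N add mul \<longleftrightarrow>
     (\<exists>e. group \<lparr>carrier = N, monoid.mult = add, monoid.one = e\<rparr>) \<and>
     (\<forall>a\<in>N. \<forall>b\<in>N. mul a b \<in> N) \<and>
     (\<forall>a\<in>N. \<forall>b\<in>N. \<forall>c\<in>N. mul (mul a b) c = mul a (mul b c)) \<and>
     (\<forall>a\<in>N. \<forall>b\<in>N. \<forall>c\<in>N. mul (add a b) c = add (mul a c) (mul b c))"

definition nr_equiv :: "'a set \<Rightarrow> ('a \<Rightarrow> 'a \<Rightarrow> 'a) \<Rightarrow> 'a \<Rightarrow> 'a \<Rightarrow> bool" where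
  "nr_equiv N mul a b \<longleftrightarrow> (\<forall>x\<in>N. mul x a = mul x b)"

definition planar_nearring :: "'a set \<Rightarrow> ('a \<Rightarrow> 'a \<Rightarrow> 'a) \<Rightarrow> ('a \<Rightarrow> 'a \<Rightarrow> 'a) \<Rightarrow> bool" where
  "planar_nearring N add mul \<longleftrightarrow>
     nearring N add mul \<and>
     (\<exists>a\<in>N. \<exists>b\<in>N. \<exists>c\<in>N. \<not> nr_equiv N mul a b \<and> \<not> nr_equiv N mul a c \<and> \<not> nr_equiv N mul b c) \<and>
     (\<forall>a\<in>N. \<forall>b\<in>N. \<forall>c\<in>N. \<not> nr_equiv N mul a b \<longrightarrow> (\<exists>!x. x \<in> N \<and> mul x a = add (mul x b) c))"

definition distributive_elems :: "'a set \<Rightarrow> ('a \<Rightarrow> 'a \<Rightarrow> 'a) \<Rightarrow> ('a \<Rightarrow> 'a \<Rightarrow> 'a) \<Rightarrow> 'a set" where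
  "distributive_elems N add mul = {n \<in> N. \<forall>a\<in>N. \<forall>b\<in>N. mul n (add a b) = add (mul n a) (mul n b)}"

definition zero_multipliers :: "'a set \<Rightarrow> ('a \<Rightarrow> 'a \<Rightarrow> 'a) \<Rightarrow> 'a \<Rightarrow> 'a set" where
  "zero_multipliers N mul z = {n \<in> N. \<forall>x\<in>N. mul x n = z}"

text \<open>The concrete construction on Z_{p^2}, represented by {0..<p^2} with arithmetic mod p^2.\<close>

definition zmod_add :: "nat \<Rightarrow> nat \<Rightarrow> nat \<Rightarrow> nat" where
  "zmod_add p a b = (a + b) mod p^2"

definition phi_of :: "nat \<Rightarrow> nat set \<Rightarrow> nat \<Rightarrow> nat \<Rightarrow> nat" where
  "phi_of p \<Phi> c b = (THE \<phi>. \<phi> \<in> \<Phi> \<and>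
      (\<exists>r. r < p^2 \<and> [r = c] (mod p) \<and> b = (r * \<phi>) mod p^2))"

definition planar_mul :: "nat \<Rightarrow> nat set \<Rightarrow> nat \<Rightarrow> nat \<Rightarrow> nat \<Rightarrow> nat" where
  "planar_mul p \<Phi> c a b = (if p dvd b then 0 else (a * phi_of p \<Phi> c b) mod p^2)"

end

theory Submission
  imports Defs "HOL-Algebra.Multiplicative_Group"
begin

text \<open>
  If x \<equiv> 1 (mod p) then x^p \<equiv> 1 (mod p^2); since every element of \<Phi> satisfies
  x^(p-1) \<equiv> 1 (mod p^2), the only element of \<Phi> congruent to 1 mod p is 1. Hence reduction
  mod p maps \<Phi> bijectively onto the units of Z/p, and \<phi>_b is the unique element of \<Phi> with
  c \<phi>_b \<equiv> b (mod p). Everything then follows from b \<mapsto> \<phi>_b depending only on b mod p: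
  \<phi>_(b \<phi>_d) = \<phi>_b \<phi>_d gives associativity, a \<cong> b iff a \<equiv> b (mod p), and
  x (\<phi>_a - \<phi>_b) = d has a unique solution because \<phi>_a - \<phi>_b is a unit.
  Since \<phi>_(a+b) \<equiv> \<phi>_a + \<phi>_b (mod p), multiples of p are distributive. If n is not a multiple
  of p and distributive, then k \<mapsto> n * k is additive, so 0 = n * p = p (n * 1), although
  n * 1 = n \<phi>_1 is a unit.
\<close>

lemma cong_one_pow_modulus_square:
  fixes a p :: int
  assumes "[a = 1] (mod p)"
  shows "[a ^ nat p = 1] (mod p^2)"
proof -
  have "p dvd a - 1"
    using assms by (simp add: cong_iff_dvd_diff)
  moreover have "[(\<Sum>i<nat p. a^i) = (\<Sum>i<nat p. 1)] (mod p)"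
    by (rule cong_sum) (use assms cong_pow in fastforce)
  then have "p dvd (\<Sum>i<nat p. a^i)"
    by (cases "p \<ge> 0") (auto simp: cong_0_iff cong_dvd_iff)
  ultimately have "p^2 dvd (a - 1) * (\<Sum>i<nat p. a^i)"
    by (simp add: power2_eq_square mult_dvd_mono)
  then show ?thesis
    by (simp add: power_diff_1_eq[symmetric] cong_iff_dvd_diff)
qed

lemma ex1_solution_linear_cong:
  fixes m u v d :: nat
  assumes "0 < m" and "coprime (int u - int v) (int m)"
  shows "\<exists>!x. x < m \<and> [x * u = x * v + d] (mod m)"
proof -
  define w where "w = int u - int v"
  have iff: "[x * u = x * v + d] (mod m) \<longleftrightarrow> [int x * w = int d] (mod int m)" for x
  proof -
    have "[x * u = x * v + d] (mod m) \<longleftrightarrow> [int (x * u) = int (x * v + d)] (mod int m)"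
      by (rule cong_int_iff[symmetric])
    also have "\<dots> \<longleftrightarrow> [int x * w = int d] (mod int m)"
      by (simp add: cong_iff_dvd_diff w_def algebra_simps)
    finally show ?thesis .
  qed
  obtain w' where w': "[w * w' = 1] (mod int m)"
    using cong_solve_coprime_int assms(2) unfolding w_def by blast
  define x0 where "x0 = nat ((int d * w') mod int m)"
  have x0: "int x0 = (int d * w') mod int m"
    using assms(1) by (simp add: x0_def)
  then have "x0 < m"
    using assms(1) by (metis of_nat_less_iff pos_mod_bound of_nat_0_less_iff)
  have "[int x0 * w = int d * (w * w')] (mod int m)"
    unfolding x0 by (simp add: cong_def mod_mult_right_eq ac_simps)
  also have "[int d * (w * w') = int d * 1] (mod int m)"
    using w' by (rule cong_scalar_left)
  finally have x0_sol: "[int x0 * w = int d] (mod int m)"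
    by simp
  show ?thesis
  proof (rule ex1I[of _ x0])
    show "x0 < m \<and> [x0 * u = x0 * v + d] (mod m)"
      using \<open>x0 < m\<close> x0_sol iff by blast
  next
    fix y assume y: "y < m \<and> [y * u = y * v + d] (mod m)"
    then have "[int y * w = int x0 * w] (mod int m)"
      using iff x0_sol by (metis cong_sym cong_trans)
    then have "[int y = int x0] (mod int m)"
      using cong_mult_rcancel assms(2) unfolding w_def by blast
    then show "y = x0"
      using y \<open>x0 < m\<close> by (simp add: cong_int_iff cong_less_modulus_unique_nat)
  qed
qed

lemma cong_mult_multiple_mod_square:
  fixes p n x y :: nat
  assumes "p dvd n" and "[x = y] (mod p)"
  shows "[n * x = n * y] (mod p^2)"
proof -
  obtain k where n: "n = p * k"
    using assms(1) by blast
  have "[p * x = p * y] (mod p * p)"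
    using assms(2) by (simp add: cong_def mod_mult_mult1)
  then have "[k * (p * x) = k * (p * y)] (mod p * p)"
    by (rule cong_scalar_left)
  then show ?thesis
    by (simp add: n power2_eq_square ac_simps)
qed

lemma group_zmod_add:
  assumes "0 < p"
  shows "group \<lparr>carrier = {0..<p^2}, monoid.mult = zmod_add p, one = 0\<rparr>" (is "group ?Z")
proof (rule groupI)
  fix x assume "x \<in> carrier ?Z"
  then have "(p^2 - x) mod p^2 \<in> carrier ?Z \<and> (p^2 - x) mod p^2 \<otimes>\<^bsub>?Z\<^esub> x = \<one>\<^bsub>?Z\<^esub>"
    using assms by (auto simp: zmod_add_def mod_add_left_eq)
  then show "\<exists>y\<in>carrier ?Z. y \<otimes>\<^bsub>?Z\<^esub> x = \<one>\<^bsub>?Z\<^esub>"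
    by blast
qed (use assms in \<open>auto simp: zmod_add_def mod_add_left_eq mod_add_right_eq add.assoc\<close>)

locale unit_subgroup_mod_prime_square =
  fixes p :: nat and \<Phi> :: "nat set"
  assumes prime: "prime p"
    and Phi_subset: "\<Phi> \<subseteq> {0..<p^2}"
    and Phi_coprime: "\<And>x. x \<in> \<Phi> \<Longrightarrow> coprime x p"
    and one_in_Phi: "1 \<in> \<Phi>"
    and Phi_mult_closed: "\<And>x y. x \<in> \<Phi> \<Longrightarrow> y \<in> \<Phi> \<Longrightarrow> (x * y) mod p^2 \<in> \<Phi>"
    and Phi_inverse: "\<And>x. x \<in> \<Phi> \<Longrightarrow> \<exists>y\<in>\<Phi>. (x * y) mod p^2 = 1"
    and card_Phi: "card \<Phi> = p - 1"
begin

lemma one_less_p: "1 < p"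
  using prime by (rule prime_gt_1_nat)

lemma prime_less_square: "p < p^2"
proof -
  have "p * 1 < p * p"
    using one_less_p by (intro mult_strict_left_mono) auto
  then show ?thesis
    by (simp add: power2_eq_square)
qed

lemma one_less_square: "1 < p^2"
  using prime_less_square one_less_p by linarith

lemma p_pos [simp]: "0 < p"
  using one_less_p by linarith

lemma Phi_less: "x \<in> \<Phi> \<Longrightarrow> x < p^2"
  using Phi_subset by auto

lemma Phi_not_dvd: "x \<in> \<Phi> \<Longrightarrow> \<not> p dvd x"
  using Phi_coprime coprime_absorb_right prime not_prime_unit by blast

lemma dvd_mod_square_iff [simp]: "p dvd x mod p^2 \<longleftrightarrow> p dvd x"
  by (simp add: dvd_mod_iff)

lemma cong_mod_square: "[x mod p^2 = x] (mod p)"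
  unfolding cong_def by (rule mod_mod_cancel) simp

lemma cong_mod_square_imp_cong: "[x = y] (mod p^2) \<Longrightarrow> [x = y] (mod p)"
  by (erule cong_dvd_modulus_nat) (simp add: power2_eq_square)

lemma cong_one_mod_square_iff: "[x = 1] (mod p^2) \<longleftrightarrow> x mod p^2 = 1"
  unfolding cong_def mod_less[OF one_less_square] ..

definition Phi_group :: "nat monoid" where
  "Phi_group = \<lparr>carrier = \<Phi>, monoid.mult = (\<lambda>x y. (x * y) mod p^2), one = 1\<rparr>"

lemma group_Phi_group: "group Phi_group"
proof (rule groupI)
  fix x assume "x \<in> carrier Phi_group"
  then obtain y where "y \<in> \<Phi>" "(x * y) mod p^2 = 1"
    using Phi_inverse by (auto simp: Phi_group_def)
  then show "\<exists>y\<in>carrier Phi_group. y \<otimes>\<^bsub>Phi_group\<^esub> x = \<one>\<^bsub>Phi_group\<^esub>"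
    by (auto simp: Phi_group_def mult.commute)
qed (use one_in_Phi in
    \<open>auto simp: Phi_group_def Phi_mult_closed Phi_less mod_mult_left_eq mod_mult_right_eq mult.assoc\<close>)

lemma Phi_group_pow: "x \<in> \<Phi> \<Longrightarrow> x [^]\<^bsub>Phi_group\<^esub> (k::nat) = x^k mod p^2"
  by (induction k) (use one_less_square in \<open>auto simp: Phi_group_def Phi_less mod_mult_right_eq mult.commute\<close>)

lemma Phi_pow_card: "x \<in> \<Phi> \<Longrightarrow> [x ^ (p - 1) = 1] (mod p^2)"
  using group.pow_order_eq_1[OF group_Phi_group, of x] Phi_group_pow[of x "p - 1"] card_Phi
    one_less_square one_less_p
  by (simp add: Phi_group_def order_def cong_def)

lemma Phi_eq_one_if_cong_one:
  assumes x: "x \<in> \<Phi>" and "[x = 1] (mod p)"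
  shows "x = 1"
proof -
  have "[int x ^ nat (int p) = 1] (mod (int p)^2)"
    using assms(2) by (intro cong_one_pow_modulus_square) (simp add: cong_int_iff[of x 1 p, simplified])
  then have "[int (x ^ p) = int 1] (mod int (p^2))"
    by simp
  then have "[x ^ p = 1] (mod p^2)"
    by (simp only: cong_int_iff)
  moreover have "x ^ p = x * x ^ (p - 1)"
    using one_less_p by (simp flip: power_Suc)
  moreover have "[x * x ^ (p - 1) = x * 1] (mod p^2)"
    using Phi_pow_card[OF x] by (rule cong_scalar_left)
  ultimately have "[x = 1] (mod p^2)"
    by (metis cong_sym cong_trans mult_1_right)
  then show ?thesis
    using Phi_less[OF x] one_less_square cong_less_modulus_unique_nat by blast
qed

lemma Phi_eq_if_cong:
  assumes x: "x \<in> \<Phi>" and y: "y \<in> \<Phi>" and "[x = y] (mod p)"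
  shows "x = y"
proof -
  obtain y' where y': "y' \<in> \<Phi>" and yy': "[y * y' = 1] (mod p^2)"
    using Phi_inverse[OF y] cong_one_mod_square_iff by blast
  have "[(x * y') mod p^2 = x * y'] (mod p)"
    by (rule cong_mod_square)
  also have "[x * y' = y * y'] (mod p)"
    using assms(3) by (rule cong_scalar_right)
  also have "[y * y' = 1] (mod p)"
    using yy' by (rule cong_mod_square_imp_cong)
  finally have "(x * y') mod p^2 = 1"
    using Phi_eq_one_if_cong_one Phi_mult_closed x y' by blast
  then have xy': "[x * y' = 1] (mod p^2)"
    using cong_one_mod_square_iff by blast
  have "[x = x * (y * y')] (mod p^2)"
    using cong_scalar_left[OF yy', of x] by (simp add: cong_sym_eq)
  also have "x * (y * y') = x * y' * y"
    by (simp add: ac_simps)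
  also have "[x * y' * y = 1 * y] (mod p^2)"
    using xy' by (rule cong_scalar_right)
  finally show ?thesis
    using Phi_less x y cong_less_modulus_unique_nat by simp
qed

lemma Phi_solves_cong:
  assumes u: "\<not> p dvd u" and b: "\<not> p dvd b"
  shows "\<exists>x\<in>\<Phi>. [u * x = b] (mod p)"
proof -
  define f where "f x = (u * x) mod p" for x
  have inj: "inj_on f \<Phi>"
  proof (rule inj_onI)
    fix x y assume xy: "x \<in> \<Phi>" "y \<in> \<Phi>" "f x = f y"
    have "coprime u p"
      using prime_imp_coprime[OF prime u] by (simp only: coprime_commute)
    moreover have "[u * x = u * y] (mod p)"
      using xy(3) by (simp add: f_def cong_def)
    ultimately have "[x = y] (mod p)"
      using cong_mult_lcancel_nat by blast
    then show "x = y"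
      using Phi_eq_if_cong xy by blast
  qed
  have sub: "f ` \<Phi> \<subseteq> {1..<p}"
  proof
    fix z assume "z \<in> f ` \<Phi>"
    then obtain x where x: "x \<in> \<Phi>" "z = (u * x) mod p"
      by (auto simp: f_def)
    then have "\<not> p dvd u * x"
      using u Phi_not_dvd prime by (simp add: prime_dvd_mult_iff)
    then have "z \<noteq> 0"
      using x(2) by (simp add: mod_eq_0_iff_dvd)
    moreover have "z < p"
      using x(2) one_less_p by simp
    ultimately show "z \<in> {1..<p}"
      by simp
  qed
  have "b mod p \<noteq> 0"
    using b by (simp add: mod_eq_0_iff_dvd)
  then have "b mod p \<in> {1..<p}"
    using one_less_p by simp
  also have "{1..<p} = f ` \<Phi>"
    by (rule card_subset_eq[OF _ sub, symmetric]) (simp_all add: card_image[OF inj] card_Phi)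
  finally obtain x where "x \<in> \<Phi>" "f x = b mod p"
    by (rule imageE) simp
  then show ?thesis
    unfolding f_def cong_def by blast
qed

end

locale planar_construction = unit_subgroup_mod_prime_square +
  fixes c :: nat
  assumes c_coprime: "coprime c p"
begin

lemma c_not_dvd: "\<not> p dvd c"
  using c_coprime coprime_absorb_right prime not_prime_unit by blast

lemma cong_cancel_c: "[c * x = c * y] (mod p) \<longleftrightarrow> [x = y] (mod p)"
  by (rule cong_mult_lcancel_nat[OF c_coprime])

lemma phi_of_condition_iff:
  assumes b: "b < p^2" and f: "f \<in> \<Phi>"
  shows "(\<exists>r. r < p^2 \<and> [r = c] (mod p) \<and> b = (r * f) mod p^2) \<longleftrightarrow> [c * f = b] (mod p)"
proof
  assume "\<exists>r. r < p^2 \<and> [r = c] (mod p) \<and> b = (r * f) mod p^2"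
  then obtain r where r: "[r = c] (mod p)" "b = (r * f) mod p^2"
    by blast
  have "[c * f = r * f] (mod p)"
    using r(1) by (intro cong_scalar_right) (rule cong_sym)
  also have "[r * f = b] (mod p)"
    unfolding r(2) by (rule cong_mod_square[THEN cong_sym])
  finally show "[c * f = b] (mod p)" .
next
  assume cf: "[c * f = b] (mod p)"
  obtain f' where f': "[f * f' = 1] (mod p^2)"
    using Phi_inverse[OF f] cong_one_mod_square_iff by blast
  define r where "r = (b * f') mod p^2"
  have "[r = b * f'] (mod p)"
    unfolding r_def by (rule cong_mod_square)
  also have "[b * f' = c * f * f'] (mod p)"
    using cf by (intro cong_scalar_right) (rule cong_sym)
  also have "c * f * f' = c * (f * f')"
    by (simp add: ac_simps)
  also have "[c * (f * f') = c * 1] (mod p)"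
    using f' by (intro cong_scalar_left cong_mod_square_imp_cong)
  finally have "[r = c] (mod p)"
    by simp
  moreover have "(r * f) mod p^2 = b"
  proof -
    have "[r * f = b * (f * f')] (mod p^2)"
      unfolding r_def by (simp add: cong_def mod_mult_right_eq ac_simps)
    also have "[b * (f * f') = b * 1] (mod p^2)"
      using f' by (rule cong_scalar_left)
    finally show ?thesis
      using b by (simp add: cong_def)
  qed
  moreover have "r < p^2"
    using one_less_square by (simp add: r_def)
  ultimately show "\<exists>r. r < p^2 \<and> [r = c] (mod p) \<and> b = (r * f) mod p^2"
    by auto
qed

lemma phi_of_eqI:
  assumes b: "b < p^2" and f: "f \<in> \<Phi>" and cf: "[c * f = b] (mod p)"
  shows "phi_of p \<Phi> c b = f"
  unfolding phi_of_def
proof (rule the_equality)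
  show "f \<in> \<Phi> \<and> (\<exists>r. r < p^2 \<and> [r = c] (mod p) \<and> b = (r * f) mod p^2)"
    using phi_of_condition_iff[OF b f] f cf by blast
next
  fix g assume "g \<in> \<Phi> \<and> (\<exists>r. r < p^2 \<and> [r = c] (mod p) \<and> b = (r * g) mod p^2)"
  then have g: "g \<in> \<Phi>" "[c * g = b] (mod p)"
    using phi_of_condition_iff[OF b] by blast+
  then have "[c * g = c * f] (mod p)"
    using cf cong_sym cong_trans by blast
  then show "g = f"
    using Phi_eq_if_cong g(1) f cong_cancel_c by blast
qed

text \<open>The paper's \<phi>_b, extended by 0 on pZ so that a * b = a \<phi>_b mod p^2 for all b.\<close>
definition multiplier :: "nat \<Rightarrow> nat" where
  "multiplier b = (if p dvd b then 0 else phi_of p \<Phi> c b)"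

lemma planar_mul_eq: "planar_mul p \<Phi> c a b = (a * multiplier b) mod p^2"
  by (simp add: planar_mul_def multiplier_def)

lemma multiplier_in_Phi:
  assumes "b < p^2" and "\<not> p dvd b"
  shows "multiplier b \<in> \<Phi>" and "[c * multiplier b = b] (mod p)"
proof -
  obtain f where "f \<in> \<Phi>" "[c * f = b] (mod p)"
    using Phi_solves_cong[OF c_not_dvd assms(2)] by blast
  with assms show "multiplier b \<in> \<Phi>" "[c * multiplier b = b] (mod p)"
    by (simp_all add: multiplier_def phi_of_eqI)
qed

lemma multiplier_cong:
  assumes "b < p^2"
  shows "[c * multiplier b = b] (mod p)"
proof (cases "p dvd b")
  case True
  then show ?thesis
    by (simp add: multiplier_def cong_sym_eq[of 0] cong_0_iff)
next
  case False
  with assms show ?thesis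
    by (rule multiplier_in_Phi(2))
qed

lemma multiplier_eq_if_cong:
  assumes a: "a < p^2" and b: "b < p^2" and ab: "[a = b] (mod p)"
  shows "multiplier a = multiplier b"
proof (cases "p dvd a")
  case True
  then have "p dvd b"
    using cong_dvd_iff ab by blast
  with True show ?thesis
    by (simp add: multiplier_def)
next
  case False
  then have "\<not> p dvd b"
    using cong_dvd_iff ab by blast
  moreover have "[c * multiplier a = b] (mod p)"
    using multiplier_cong[OF a] ab by (rule cong_trans)
  ultimately have "phi_of p \<Phi> c b = multiplier a"
    using phi_of_eqI[OF b multiplier_in_Phi(1)[OF a False]] by blast
  with \<open>\<not> p dvd b\<close> show ?thesis
    by (simp add: multiplier_def)
qed

lemma multiplier_mult:
  assumes b: "b < p^2" and d: "d < p^2"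
  shows "multiplier ((b * multiplier d) mod p^2) = (multiplier b * multiplier d) mod p^2"
proof (cases "p dvd b \<or> p dvd d")
  case True
  then show ?thesis
    by (auto simp: multiplier_def)
next
  case False
  then have units: "multiplier b \<in> \<Phi>" "multiplier d \<in> \<Phi>"
    using multiplier_in_Phi(1) b d by auto
  have not_dvd: "\<not> p dvd (b * multiplier d) mod p^2"
    using False Phi_not_dvd[OF units(2)] prime by (simp add: prime_dvd_mult_iff)
  have "[c * ((multiplier b * multiplier d) mod p^2) = c * multiplier b * multiplier d] (mod p)"
    using cong_mod_square by (simp add: cong_scalar_left mult.assoc)
  also have "[c * multiplier b * multiplier d = b * multiplier d] (mod p)"
    using multiplier_cong[OF b] by (rule cong_scalar_right)
  also have "[b * multiplier d = (b * multiplier d) mod p^2] (mod p)"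
    using cong_mod_square by (rule cong_sym)
  finally have "phi_of p \<Phi> c ((b * multiplier d) mod p^2) = (multiplier b * multiplier d) mod p^2"
    using one_less_square Phi_mult_closed[OF units] by (intro phi_of_eqI) simp_all
  with not_dvd show ?thesis
    by (simp add: multiplier_def)
qed

lemma multiplier_add_cong:
  assumes "a < p^2" and "b < p^2"
  shows "[multiplier ((a + b) mod p^2) = multiplier a + multiplier b] (mod p)"
proof -
  have "[c * multiplier ((a + b) mod p^2) = (a + b) mod p^2] (mod p)"
    by (intro multiplier_cong) simp
  also have "[(a + b) mod p^2 = a + b] (mod p)"
    by (rule cong_mod_square)
  also have "[a + b = c * (multiplier a + multiplier b)] (mod p)"
    unfolding distrib_left
    using cong_sym[OF multiplier_cong[OF assms(1)]] cong_sym[OF multiplier_cong[OF assms(2)]]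
    by (rule cong_add)
  finally show ?thesis
    using cong_cancel_c by blast
qed

lemma nearring_planar_mul: "nearring {0..<p^2} (zmod_add p) (planar_mul p \<Phi> c)"
  unfolding nearring_def
proof (intro conjI ballI)
  show "\<exists>e. group \<lparr>carrier = {0..<p^2}, monoid.mult = zmod_add p, one = e\<rparr>"
    using group_zmod_add[OF p_pos] by blast
next
  fix a b assume "a \<in> {0..<p^2}" "b \<in> {0..<p^2}"
  show "planar_mul p \<Phi> c a b \<in> {0..<p^2}"
    by (simp add: planar_mul_eq)
next
  fix a b d assume "a \<in> {0..<p^2}" "b \<in> {0..<p^2}" "d \<in> {0..<p^2}"
  then show "planar_mul p \<Phi> c (planar_mul p \<Phi> c a b) d = planar_mul p \<Phi> c a (planar_mul p \<Phi> c b d)"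
    by (simp add: planar_mul_eq multiplier_mult mod_mult_left_eq mod_mult_right_eq mult.assoc)
next
  fix a b d
  show "planar_mul p \<Phi> c (zmod_add p a b) d = zmod_add p (planar_mul p \<Phi> c a d) (planar_mul p \<Phi> c b d)"
    by (simp add: planar_mul_eq zmod_add_def mod_mult_left_eq mod_add_eq distrib_right)
qed

lemma nr_equiv_planar_mul_iff:
  assumes a: "a < p^2" and b: "b < p^2"
  shows "nr_equiv {0..<p^2} (planar_mul p \<Phi> c) a b \<longleftrightarrow> [a = b] (mod p)"
proof
  assume "nr_equiv {0..<p^2} (planar_mul p \<Phi> c) a b"
  then have "planar_mul p \<Phi> c 1 a = planar_mul p \<Phi> c 1 b"
    using one_less_square by (simp add: nr_equiv_def)
  then have "[multiplier a = multiplier b] (mod p^2)"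
    by (simp add: planar_mul_eq cong_def)
  then have "[c * multiplier a = c * multiplier b] (mod p)"
    by (intro cong_scalar_left cong_mod_square_imp_cong)
  then show "[a = b] (mod p)"
    using multiplier_cong[OF a] multiplier_cong[OF b] by (meson cong_sym cong_trans)
next
  assume "[a = b] (mod p)"
  then show "nr_equiv {0..<p^2} (planar_mul p \<Phi> c) a b"
    using multiplier_eq_if_cong[OF a b] by (simp add: nr_equiv_def planar_mul_eq)
qed

lemma planar_equation_ex1:
  assumes a: "a < p^2" and b: "b < p^2" and ab: "\<not> [a = b] (mod p)"
  shows "\<exists>!x. x \<in> {0..<p^2} \<and> planar_mul p \<Phi> c x a = zmod_add p (planar_mul p \<Phi> c x b) d"
proof -
  define u v where "u = multiplier a" and "v = multiplier b"
  have "\<not> [u = v] (mod p)"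
  proof
    assume "[u = v] (mod p)"
    then have "[c * u = c * v] (mod p)"
      by (rule cong_scalar_left)
    then show False
      using ab multiplier_cong[OF a] multiplier_cong[OF b] unfolding u_def v_def
      by (meson cong_sym cong_trans)
  qed
  then have "\<not> int p dvd int u - int v"
    by (simp add: cong_iff_dvd_diff flip: cong_int_iff)
  then have "coprime (int p) (int u - int v)"
    using prime by (simp add: prime_imp_coprime prime_nat_int_transfer)
  then have "coprime (int u - int v) (int (p^2))"
    by (simp add: coprime_commute)
  moreover have eq: "planar_mul p \<Phi> c x a = zmod_add p (planar_mul p \<Phi> c x b) d
      \<longleftrightarrow> [x * u = x * v + d] (mod p^2)" for x
    by (simp add: planar_mul_eq zmod_add_def cong_def mod_add_left_eq u_def v_def)
  ultimately have "\<exists>!x. x < p^2 \<and> [x * u = x * v + d] (mod p^2)"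
    by (intro ex1_solution_linear_cong) simp_all
  then show ?thesis
    by (simp only: eq atLeastLessThan_iff zero_le simp_thms)
qed

lemma planar_nearring_planar_mul:
  assumes "odd p"
  shows "planar_nearring {0..<p^2} (zmod_add p) (planar_mul p \<Phi> c)"
proof -
  have "2 < p"
    using assms one_less_p by (cases "p = 2") auto
  then have "2 < p^2"
    using prime_less_square by linarith
  then have "\<not> nr_equiv {0..<p^2} (planar_mul p \<Phi> c) 0 1"
    "\<not> nr_equiv {0..<p^2} (planar_mul p \<Phi> c) 0 2"
    "\<not> nr_equiv {0..<p^2} (planar_mul p \<Phi> c) 1 2"
    and "(0::nat) \<in> {0..<p^2}" "(1::nat) \<in> {0..<p^2}" "(2::nat) \<in> {0..<p^2}"
    using \<open>2 < p\<close> by (simp_all add: nr_equiv_planar_mul_iff cong_def)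
  then have "\<exists>a\<in>{0..<p^2}. \<exists>b\<in>{0..<p^2}. \<exists>d\<in>{0..<p^2}.
      \<not> nr_equiv {0..<p^2} (planar_mul p \<Phi> c) a b \<and> \<not> nr_equiv {0..<p^2} (planar_mul p \<Phi> c) a d
      \<and> \<not> nr_equiv {0..<p^2} (planar_mul p \<Phi> c) b d"
    by blast
  moreover have "\<forall>a\<in>{0..<p^2}. \<forall>b\<in>{0..<p^2}. \<forall>d\<in>{0..<p^2}.
      \<not> nr_equiv {0..<p^2} (planar_mul p \<Phi> c) a b
      \<longrightarrow> (\<exists>!x. x \<in> {0..<p^2} \<and> planar_mul p \<Phi> c x a = zmod_add p (planar_mul p \<Phi> c x b) d)"
    using planar_equation_ex1 nr_equiv_planar_mul_iff by simp
  ultimately show ?thesis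
    unfolding planar_nearring_def using nearring_planar_mul by (intro conjI)
qed

lemma planar_mul_distrib_if_dvd:
  assumes "p dvd n" and "a < p^2" and "b < p^2"
  shows "planar_mul p \<Phi> c n (zmod_add p a b)
    = zmod_add p (planar_mul p \<Phi> c n a) (planar_mul p \<Phi> c n b)"
proof -
  have "[n * multiplier ((a + b) mod p^2) = n * (multiplier a + multiplier b)] (mod p^2)"
    using assms(1) multiplier_add_cong[OF assms(2,3)] by (rule cong_mult_multiple_mod_square)
  then show ?thesis
    by (simp add: planar_mul_eq zmod_add_def cong_def mod_add_eq distrib_left)
qed

lemma planar_mul_not_distrib_if_not_dvd:
  assumes n: "\<not> p dvd n"
  shows "\<exists>a\<in>{0..<p^2}. \<exists>b\<in>{0..<p^2}. planar_mul p \<Phi> c n (zmod_add p a b)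
    \<noteq> zmod_add p (planar_mul p \<Phi> c n a) (planar_mul p \<Phi> c n b)"
proof (rule ccontr)
  assume "\<not> ?thesis"
  then have distrib: "planar_mul p \<Phi> c n (zmod_add p a b)
      = zmod_add p (planar_mul p \<Phi> c n a) (planar_mul p \<Phi> c n b)"
    if "a < p^2" "b < p^2" for a b
    using that by auto
  define t where "t = planar_mul p \<Phi> c n 1"
  have linear: "planar_mul p \<Phi> c n k = (k * t) mod p^2" if "k \<le> p" for k
    using that
  proof (induction k)
    case 0
    then show ?case
      by (simp add: planar_mul_eq multiplier_def)
  next
    case (Suc k)
    then have "k < p^2" "zmod_add p k 1 = Suc k"
      using prime_less_square by (simp_all add: zmod_add_def)
    then have "planar_mul p \<Phi> c n (Suc k) = zmod_add p (planar_mul p \<Phi> c n k) t"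
      using distrib[of k 1] one_less_square unfolding t_def by simp
    also have "\<dots> = (Suc k * t) mod p^2"
      using Suc by (simp add: zmod_add_def mod_add_right_eq add.commute)
    finally show ?case .
  qed
  have "(p * t) mod p^2 = 0"
    using linear[of p] by (simp add: planar_mul_def)
  then have "p dvd t"
    using p_pos by (simp add: power2_eq_square mod_eq_0_iff_dvd)
  moreover have "multiplier 1 \<in> \<Phi>"
    using one_less_square one_less_p by (intro multiplier_in_Phi(1)) auto
  then have "\<not> p dvd t"
    using n Phi_not_dvd prime by (simp add: t_def planar_mul_eq prime_dvd_mult_iff)
  ultimately show False
    by blast
qed

lemma distributive_elems_planar_mul:
  "distributive_elems {0..<p^2} (zmod_add p) (planar_mul p \<Phi> c) = {x \<in> {0..<p^2}. p dvd x}"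
proof -
  have "(\<forall>a\<in>{0..<p^2}. \<forall>b\<in>{0..<p^2}. planar_mul p \<Phi> c n (zmod_add p a b)
      = zmod_add p (planar_mul p \<Phi> c n a) (planar_mul p \<Phi> c n b)) \<longleftrightarrow> p dvd n" for n
  proof
    assume "\<forall>a\<in>{0..<p^2}. \<forall>b\<in>{0..<p^2}. planar_mul p \<Phi> c n (zmod_add p a b)
      = zmod_add p (planar_mul p \<Phi> c n a) (planar_mul p \<Phi> c n b)"
    then show "p dvd n"
      using planar_mul_not_distrib_if_not_dvd by blast
  next
    assume "p dvd n"
    then show "\<forall>a\<in>{0..<p^2}. \<forall>b\<in>{0..<p^2}. planar_mul p \<Phi> c n (zmod_add p a b)
      = zmod_add p (planar_mul p \<Phi> c n a) (planar_mul p \<Phi> c n b)"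
      using planar_mul_distrib_if_dvd by simp
  qed
  then show ?thesis
    unfolding distributive_elems_def by blast
qed

end

theorem mainTheorem13:
  fixes p c :: nat and \<Phi> :: "nat set"
  assumes "prime p" and "odd p"
    and "\<Phi> \<subseteq> {0..<p^2}"
    and "\<forall>x\<in>\<Phi>. coprime x p"
    and "1 \<in> \<Phi>"
    and "\<forall>x\<in>\<Phi>. \<forall>y\<in>\<Phi>. (x * y) mod p^2 \<in> \<Phi>"
    and "\<forall>x\<in>\<Phi>. \<exists>y\<in>\<Phi>. (x * y) mod p^2 = 1"
    and "card \<Phi> = p - 1"
    and "c < p^2" and "coprime c p"
  shows "planar_nearring {0..<p^2} (zmod_add p) (planar_mul p \<Phi> c)
    \<and> distributive_elems {0..<p^2} (zmod_add p) (planar_mul p \<Phi> c) = {x \<in> {0..<p^2}. p dvd x}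
    \<and> distributive_elems {0..<p^2} (zmod_add p) (planar_mul p \<Phi> c)
        \<subseteq> zero_multipliers {0..<p^2} (planar_mul p \<Phi> c) 0"
proof -
  interpret planar_construction p \<Phi> c
    using assms by unfold_locales auto
  have "{x \<in> {0..<p^2}. p dvd x} \<subseteq> zero_multipliers {0..<p^2} (planar_mul p \<Phi> c) 0"
    by (auto simp: zero_multipliers_def planar_mul_def)
  then show ?thesis
    using planar_nearring_planar_mul[OF \<open>odd p\<close>] distributive_elems_planar_mul by simp
qed

end
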